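(* Let $\mathbf{A}=(A,<^{\mathbf{A}},P_1^{\mathbf{A}},P_2^{\mathbf{A}})\in\mathcal{P}_2$. Then the tournament $p(\mathbf{A})$ is isomorphic to an induced subtournament of $\mathbf{S}(2)$.
   Context: $\mathcal{P}_2$ is the class of finite structures $(A,<^{\mathbf{A}},P_1^{\mathbf{A}},P_2^{\mathbf{A}})$ with $<^{\mathbf{A}}$ a linear order on $A$ and $(P_1^{\mathbf{A}},P_2^{\mathbf{A}})$ a partition of $A$. Writing $a\sim b$ when $a,b$ lie in the same part, $p(\mathbf{A})$ is the tournament on $A$ with an arc from $a$ to $b$ iff either ($a\sim b$ and $a<^{\mathbf{A}}b$) or ($a\not\sim b$ and $b<^{\mathbf{A}}a$). $\mathbf{S}(2)$ is the tournament whose vertices are the points of the unit circle of $\mathbb{C}$ with rational argument, with an arc from $x$ to $y$ iff $0<\arg(y/x)<\pi$. *)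

theory Defs
  imports "HOL-Analysis.Analysis"
begin

definition in_P2 :: "'a set \<Rightarrow> ('a \<Rightarrow> 'a \<Rightarrow> bool) \<Rightarrow> 'a set \<Rightarrow> 'a set \<Rightarrow> bool" where
  "in_P2 A lt P1 P2 \<longleftrightarrow>
     finite A \<and>
     (\<forall>a\<in>A. \<not> lt a a) \<and>
     (\<forall>a\<in>A. \<forall>b\<in>A. \<forall>c\<in>A. lt a b \<longrightarrow> lt b c \<longrightarrow> lt a c) \<and>
     (\<forall>a\<in>A. \<forall>b\<in>A. a \<noteq> b \<longrightarrow> lt a b \<or> lt b a) \<and>
     P1 \<union> P2 = A \<and> P1 \<inter> P2 = {}"

definition same_part :: "'a set \<Rightarrow> 'a set \<Rightarrow> 'a \<Rightarrow> 'a \<Rightarrow> bool" where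
  "same_part P1 P2 a b \<longleftrightarrow> (a \<in> P1 \<and> b \<in> P1) \<or> (a \<in> P2 \<and> b \<in> P2)"

definition p_arc :: "('a \<Rightarrow> 'a \<Rightarrow> bool) \<Rightarrow> 'a set \<Rightarrow> 'a set \<Rightarrow> 'a \<Rightarrow> 'a \<Rightarrow> bool" where
  "p_arc lt P1 P2 a b \<longleftrightarrow>
     (same_part P1 P2 a b \<and> lt a b) \<or> (\<not> same_part P1 P2 a b \<and> lt b a)"

definition S2_vertices :: "complex set" where
  "S2_vertices = {z. norm z = 1 \<and> Arg z \<in> \<rat>}"

definition S2_arc :: "complex \<Rightarrow> complex \<Rightarrow> bool" where
  "S2_arc x y \<longleftrightarrow> 0 < Arg (y / x) \<and> Arg (y / x) < pi"

end

theory Submission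
  imports Defs
begin

text \<open>Place the points of \<open>P\<^sub>1\<close> at small positive angles \<open>t a\<close>, increasing along
  the order, and those of \<open>P\<^sub>2\<close> at \<open>t a - d\<close>, where the rational \<open>d\<close> is slightly larger
  than \<open>\<pi>\<close>. Within a part, the arc direction is the sign of \<open>t b - t a\<close>, as in \<open>p(A)\<close>.
  Across parts the angle difference is shifted by almost exactly \<open>\<pm>\<pi>\<close>, which flips
  that sign; the excess \<open>d - \<pi>\<close> is harmless as long as it is smaller than every gap
  \<open>|t a - t b|\<close>.\<close>

lemma sin_pos_iff:
  assumes "\<bar>x\<bar> < pi"
  shows "0 < sin x \<longleftrightarrow> 0 < x"
proof (cases x "0 :: real" rule: linorder_cases)
  case less
  then have "0 < sin (- x)" using assms by (intro sin_gt_zero) auto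
  with less show ?thesis by simp
qed (use assms sin_gt_zero in auto)

lemma sin_neg_iff: "\<bar>x\<bar> < pi \<Longrightarrow> sin x < 0 \<longleftrightarrow> x < 0"
  using sin_pos_iff[of "- x"] by auto

lemma S2_arc_cis: "S2_arc (cis x) (cis y) \<longleftrightarrow> 0 < sin (y - x)"
  unfolding S2_arc_def cis_divide Arg_lt_pi by simp

lemma S2_arc_irrefl: "\<not> S2_arc z z"
  by (cases "z = 0") (simp_all add: S2_arc_def Arg_zero)

locale finite_strict_linorder =
  fixes A :: "'a set" and lt :: "'a \<Rightarrow> 'a \<Rightarrow> bool"
  assumes finite: "finite A"
    and irrefl: "a \<in> A \<Longrightarrow> \<not> lt a a"
    and trans: "\<lbrakk>a \<in> A; b \<in> A; c \<in> A; lt a b; lt b c\<rbrakk> \<Longrightarrow> lt a c"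
    and total: "\<lbrakk>a \<in> A; b \<in> A; a \<noteq> b\<rbrakk> \<Longrightarrow> lt a b \<or> lt b a"
begin

definition rank :: "'a \<Rightarrow> nat" where
  "rank a = card {b \<in> A. lt b a}"

lemma rank_less_card:
  assumes "a \<in> A"
  shows "rank a < card A"
proof -
  have "{b \<in> A. lt b a} \<subset> A" using assms irrefl by blast
  then show ?thesis unfolding rank_def using finite by (rule psubset_card_mono[rotated])
qed

lemma rank_strict_mono:
  assumes "a \<in> A" "b \<in> A" "lt a b"
  shows "rank a < rank b"
proof -
  have "{c \<in> A. lt c a} \<subseteq> {c \<in> A. lt c b}"
    using assms trans by blast
  moreover have "a \<in> {c \<in> A. lt c b} - {c \<in> A. lt c a}"
    using assms irrefl by blast
  ultimately have "{c \<in> A. lt c a} \<subset> {c \<in> A. lt c b}" by blast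
  then show ?thesis unfolding rank_def using finite by (intro psubset_card_mono) auto
qed

lemma rank_less_rank_iff:
  assumes "a \<in> A" "b \<in> A"
  shows "rank a < rank b \<longleftrightarrow> lt a b"
proof
  assume "rank a < rank b"
  then have "a \<noteq> b" "\<not> lt b a" using rank_strict_mono[OF assms(2,1)] by auto
  then show "lt a b" using total[OF assms] by blast
qed (rule rank_strict_mono[OF assms])

lemma rational_order_embedding:
  obtains \<delta> :: real and t :: "'a \<Rightarrow> real" where "0 < \<delta>"
    and "\<And>a. a \<in> A \<Longrightarrow> t a \<in> \<rat> \<and> \<delta> \<le> t a \<and> t a < 1"
    and "\<And>a b. \<lbrakk>a \<in> A; b \<in> A\<rbrakk> \<Longrightarrow> lt a b \<longleftrightarrow> t a < t b"
    and "\<And>a b. \<lbrakk>a \<in> A; b \<in> A; a \<noteq> b\<rbrakk> \<Longrightarrow> \<delta> \<le> \<bar>t a - t b\<bar>"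
proof
  define \<delta> :: real where "\<delta> = 1 / (card A + 1)"
  define t where "t a = \<delta> * (rank a + 1)" for a
  show "0 < \<delta>" by (simp add: \<delta>_def)
  show "t a \<in> \<rat> \<and> \<delta> \<le> t a \<and> t a < 1" if "a \<in> A" for a
  proof -
    have "real (rank a + 1) < card A + 1" using rank_less_card[OF that] by linarith
    then show ?thesis by (simp add: t_def \<delta>_def field_simps)
  qed
  show "lt a b \<longleftrightarrow> t a < t b" if "a \<in> A" "b \<in> A" for a b
    using rank_less_rank_iff[OF that] \<open>0 < \<delta>\<close> by (simp add: t_def)
  show "\<delta> \<le> \<bar>t a - t b\<bar>" if "a \<in> A" "b \<in> A" "a \<noteq> b" for a b
  proof -
    have "rank a \<noteq> rank b" using rank_less_rank_iff total that by (metis less_irrefl)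
    then have "1 \<le> \<bar>real (rank a) - real (rank b)\<bar>" by linarith
    then show ?thesis using \<open>0 < \<delta>\<close> by (simp add: t_def abs_mult right_diff_distrib[symmetric])
  qed
qed

end

lemma in_P2_finite_strict_linorder: "in_P2 A lt P1 P2 \<Longrightarrow> finite_strict_linorder A lt"
  unfolding in_P2_def finite_strict_linorder_def by (elim conjE) (intro conjI allI impI; blast)

lemma p_arc_total:
  assumes "finite_strict_linorder A lt" "a \<in> A" "b \<in> A" "a \<noteq> b"
  shows "p_arc lt P1 P2 a b \<or> p_arc lt P1 P2 b a"
  using finite_strict_linorder.total[OF assms] by (auto simp: p_arc_def same_part_def)

lemma p_arc_iff_S2_arc_cis:
  assumes partition: "P1 \<union> P2 = A" "P1 \<inter> P2 = {}"
    and order: "\<And>a b. \<lbrakk>a \<in> A; b \<in> A\<rbrakk> \<Longrightarrow> lt a b \<longleftrightarrow> t a < t b"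
    and gap: "\<And>a b. \<lbrakk>a \<in> A; b \<in> A; a \<noteq> b\<rbrakk> \<Longrightarrow> d - pi < \<bar>t a - t b\<bar>"
    and bound: "\<And>a b. \<lbrakk>a \<in> A; b \<in> A\<rbrakk> \<Longrightarrow> \<bar>t a - t b\<bar> < 2 * pi - d"
    and angle_P1: "\<And>a. a \<in> P1 \<Longrightarrow> \<theta> a = t a"
    and angle_P2: "\<And>a. a \<in> P2 \<Longrightarrow> \<theta> a = t a - d"
    and "pi \<le> d" and a: "a \<in> A" and b: "b \<in> A"
  shows "p_arc lt P1 P2 a b \<longleftrightarrow> S2_arc (cis (\<theta> a)) (cis (\<theta> b))"
proof -
  define u where "u = t b - t a"
  have u_bound: "\<bar>u\<bar> + (d - pi) < pi" using bound[OF b a] by (simp add: u_def)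
  show ?thesis
  proof (cases "same_part P1 P2 a b")
    case True
    then have "\<theta> b - \<theta> a = u" by (auto simp: same_part_def u_def angle_P1 angle_P2)
    then have "S2_arc (cis (\<theta> a)) (cis (\<theta> b)) \<longleftrightarrow> 0 < sin u" by (simp add: S2_arc_cis)
    also have "\<dots> \<longleftrightarrow> 0 < u" using u_bound \<open>pi \<le> d\<close> by (intro sin_pos_iff) linarith
    also have "\<dots> \<longleftrightarrow> lt a b" using order[OF a b] by (simp add: u_def)
    finally show ?thesis using True by (simp add: p_arc_def)
  next
    case False
    have "a \<noteq> b" using False a partition by (auto simp: same_part_def)
    obtain s where s_abs: "\<bar>s\<bar> = d - pi" and sin_angle: "sin (\<theta> b - \<theta> a) = - sin (u + s)"
    proof (cases "a \<in> P1")
      case True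
      with False partition b have "b \<in> P2" by (auto simp: same_part_def)
      then have "\<theta> b - \<theta> a = (u + (pi - d)) - pi" using True by (simp add: angle_P1 angle_P2 u_def)
      then have "sin (\<theta> b - \<theta> a) = - sin (u + (pi - d))" by (simp only: sin_minus_pi)
      then show thesis using \<open>pi \<le> d\<close> by (intro that[of "pi - d"]) simp_all
    next
      case False
      with \<open>\<not> same_part P1 P2 a b\<close> partition a b have "a \<in> P2" "b \<in> P1"
        by (auto simp: same_part_def)
      then have "\<theta> b - \<theta> a = (u + (d - pi)) + pi" by (simp add: angle_P1 angle_P2 u_def)
      then have "sin (\<theta> b - \<theta> a) = - sin (u + (d - pi))" by (simp only: sin_periodic_pi)
      then show thesis using \<open>pi \<le> d\<close> by (intro that[of "d - pi"]) simp_all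
    qed
    have "S2_arc (cis (\<theta> a)) (cis (\<theta> b)) \<longleftrightarrow> sin (u + s) < 0"
      unfolding S2_arc_cis sin_angle by linarith
    also have "\<dots> \<longleftrightarrow> u + s < 0"
      using u_bound s_abs by (intro sin_neg_iff) arith
    also have "\<dots> \<longleftrightarrow> u < 0"
    proof -
      have "\<bar>s\<bar> < \<bar>u\<bar>" using gap[OF b a \<open>a \<noteq> b\<close>[symmetric]] s_abs by (simp add: u_def)
      then show ?thesis by arith
    qed
    also have "\<dots> \<longleftrightarrow> lt b a" using order[OF b a] by (simp add: u_def)
    finally show ?thesis using False by (simp add: p_arc_def)
  qed
qed

lemma inj_on_if_p_arc_iff_S2_arc:
  assumes "finite_strict_linorder A lt"
    and "\<And>a b. \<lbrakk>a \<in> A; b \<in> A\<rbrakk> \<Longrightarrow> p_arc lt P1 P2 a b \<longleftrightarrow> S2_arc (f a) (f b)"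
  shows "inj_on f A"
proof (rule inj_onI, rule ccontr)
  fix a b assume "a \<in> A" "b \<in> A" "f a = f b" "a \<noteq> b"
  then show False using p_arc_total[OF assms(1)] assms(2) S2_arc_irrefl by metis
qed

lemma cis_in_S2_vertices: "\<lbrakk>\<theta> \<in> \<rat>; -pi < \<theta>; \<theta> \<le> pi\<rbrakk> \<Longrightarrow> cis \<theta> \<in> S2_vertices"
  by (simp add: S2_vertices_def Arg_cis)

theorem lemma1:
  fixes A :: "'a set" and lt :: "'a \<Rightarrow> 'a \<Rightarrow> bool" and P1 P2 :: "'a set"
  assumes "in_P2 A lt P1 P2"
  shows "\<exists>f. inj_on f A \<and> f ` A \<subseteq> S2_vertices \<and>
             (\<forall>a\<in>A. \<forall>b\<in>A. p_arc lt P1 P2 a b \<longleftrightarrow> S2_arc (f a) (f b))"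
proof -
  interpret finite_strict_linorder A lt
    using assms by (rule in_P2_finite_strict_linorder)
  have partition: "P1 \<union> P2 = A" "P1 \<inter> P2 = {}"
    using assms by (simp_all add: in_P2_def)
  obtain \<delta> :: real and t :: "'a \<Rightarrow> real" where "0 < \<delta>"
    and t_range: "\<And>a. a \<in> A \<Longrightarrow> t a \<in> \<rat> \<and> \<delta> \<le> t a \<and> t a < 1"
    and t_order: "\<And>a b. \<lbrakk>a \<in> A; b \<in> A\<rbrakk> \<Longrightarrow> lt a b \<longleftrightarrow> t a < t b"
    and t_gap: "\<And>a b. \<lbrakk>a \<in> A; b \<in> A; a \<noteq> b\<rbrakk> \<Longrightarrow> \<delta> \<le> \<bar>t a - t b\<bar>"
    using rational_order_embedding by blast
  obtain d where "d \<in> \<rat>" "pi < d" "d < pi + \<delta>"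
    using Rats_dense_in_real[of pi "pi + \<delta>"] \<open>0 < \<delta>\<close> by auto
  define \<theta> where "\<theta> a = t a - (if a \<in> P1 then 0 else d)" for a
  have arc: "p_arc lt P1 P2 a b \<longleftrightarrow> S2_arc (cis (\<theta> a)) (cis (\<theta> b))" if "a \<in> A" "b \<in> A" for a b
  proof (rule p_arc_iff_S2_arc_cis[OF partition t_order _ _ _ _ _ that])
    show "d - pi < \<bar>t a - t b\<bar>" if "a \<in> A" "b \<in> A" "a \<noteq> b" for a b
      using t_gap[OF that] \<open>d < pi + \<delta>\<close> by linarith
    show "\<bar>t a - t b\<bar> < 2 * pi - d" if "a \<in> A" "b \<in> A" for a b
      using t_range[OF that(1)] t_range[OF that(2)] \<open>d < pi + \<delta>\<close> pi_gt3 by linarith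
  qed (use partition \<open>pi < d\<close> in \<open>auto simp: \<theta>_def\<close>)
  moreover have "cis (\<theta> a) \<in> S2_vertices" if "a \<in> A" for a
    using t_range[OF that] \<open>d \<in> \<rat>\<close> \<open>pi < d\<close> \<open>d < pi + \<delta>\<close> pi_gt3
    by (intro cis_in_S2_vertices) (auto simp: \<theta>_def)
  moreover have "inj_on (\<lambda>a. cis (\<theta> a)) A"
    by (rule inj_on_if_p_arc_iff_S2_arc[OF finite_strict_linorder_axioms arc])
  ultimately show ?thesis by (intro exI[of _ "\<lambda>a. cis (\<theta> a)"]) auto
qed

end
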